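(* Let $G$ be a graph with adjacency matrix $A$ and positive degrees $d=A\mathbf 1$, let $e=(i,j)$, $i\ne j$, $a_{ij}>0$, be any edge, $v=e_i-e_j$, and $r>0$. Let \[ S_r=(1+r)D-A+\frac{1}{\|d\|_1}dd^T . \] Then $S_r$ is symmetric positive definite, and with $x=S_r^{-1}v$, $\alpha=a_{ij}(x_i-x_j)$, $\beta=a_{ij}x^TDx$, one has $\alpha<1$ and \[ c_r(e)=\frac{\beta}{1-\alpha}. \]
   Context: Graphs are undirected and possibly weighted on vertex set $\{1,\dots,n\}$, with symmetric nonnegative adjacency matrix $A=(a_{k\ell})$; $D=\mathrm{diag}(d)$, $\|d\|_1=\sum_kd_k$, $D^{\pm1/2}=\mathrm{diag}(d_k^{\pm1/2})$; $e_k$ is the $k$-th column of the identity and $\mathbf 1$ the all-ones vector. With $\widehat A=A+a_{ij}vv^T$ (deleting edge $e$ and adding loops of weight $a_{ij}$ at $i$ and $j$; $\widehat A\mathbf 1=d$). For $r>0$ and symmetric nonnegative $B$ with $B\mathbf 1=d$, $K_r(B)=\operatorname{Tr}\Big(\big((1+r)I-D^{-1/2}BD^{-1/2}+\tfrac{1}{\|d\|_1}D^{1/2}\mathbf 1\mathbf 1^TD^{1/2}\big)^{-1}\Big)-(1+r)^{-1}$; the regularized score is $c_r(e)=K_r(\widehat A)-K_r(A)$. *)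

theory Defs
  imports "HOL-Analysis.Analysis"
begin

definition degvec :: "real^'n^'n \<Rightarrow> real^'n" where
  "degvec A = (\<chi> k. \<Sum>l\<in>UNIV. A$k$l)"

definition diagm :: "real^'n \<Rightarrow> real^'n^'n" where
  "diagm d = (\<chi> k l. if k = l then d$k else 0)"

definition outer :: "real^'n \<Rightarrow> real^'n \<Rightarrow> real^'n^'n" where
  "outer u w = (\<chi> k l. u$k * w$l)"

definition norm1 :: "real^'n \<Rightarrow> real" where
  "norm1 d = (\<Sum>k\<in>UNIV. \<bar>d$k\<bar>)"

definition sym_posdef :: "real^'n^'n \<Rightarrow> bool" where
  "sym_posdef S \<longleftrightarrow> transpose S = S \<and> (\<forall>x. x \<noteq> 0 \<longrightarrow> x \<bullet> (S *v x) > 0)"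

definition edgevec :: "'n::finite \<Rightarrow> 'n \<Rightarrow> real^'n" where
  "edgevec i j = axis i 1 - axis j 1"

definition Ahat :: "real^'n^'n \<Rightarrow> 'n \<Rightarrow> 'n \<Rightarrow> real^'n^'n" where
  "Ahat A i j = A + (A$i$j) *\<^sub>R outer (edgevec i j) (edgevec i j)"

text \<open>K_r(B), where d is the degree vector (B 1 = d).\<close>
definition Kr :: "real \<Rightarrow> real^'n \<Rightarrow> real^'n^'n \<Rightarrow> real" where
  "Kr r d B =
     trace (matrix_inv ((1 + r) *\<^sub>R mat 1
        - diagm (\<chi> k. 1 / sqrt (d$k)) ** B ** diagm (\<chi> k. 1 / sqrt (d$k))
        + (1 / norm1 d) *\<^sub>R outer (\<chi> k. sqrt (d$k)) (\<chi> k. sqrt (d$k))))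
     - 1 / (1 + r)"

definition cr :: "real \<Rightarrow> real^'n^'n \<Rightarrow> 'n \<Rightarrow> 'n \<Rightarrow> real" where
  "cr r A i j = Kr r (degvec A) (Ahat A i j) - Kr r (degvec A) A"

definition Smat :: "real \<Rightarrow> real^'n^'n \<Rightarrow> real^'n^'n" where
  "Smat r A = (1 + r) *\<^sub>R diagm (degvec A) - A
      + (1 / norm1 (degvec A)) *\<^sub>R outer (degvec A) (degvec A)"

end

theory Submission
  imports Defs
begin

text \<open>
  The quadratic form of S_r splits as
  x'S_r x = r x'Dx + (x'Dx - x'Ax) + (d'x)^2 / |d|_1, where the Laplacian part
  x'Dx - x'Ax = 1/2 sum_kl a_kl (x_k - x_l)^2 is nonnegative; so S_r is positive definite.
  Conjugating by D^(-1/2) turns K_r(B) into tr(D X^(-1)) - 1/(1+r) with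
  X = (1+r)D - B + dd'/|d|_1. Replacing A by the modified matrix changes X by the rank-one
  term -a_ij vv', so by Sherman-Morrison the inverse changes by a_ij/(1 - alpha) xx',
  whose D-weighted trace is beta/(1 - alpha). Finally t = x_i - x_j = x'S_r x, and the
  splitting gives t >= r x'Dx + a_ij t^2 > a_ij t^2, hence t > 0 and alpha = a_ij t < 1.
\<close>

lemma diagm_nth [simp]: "diagm a $ k $ l = (if k = l then a $ k else 0)"
  by (simp add: diagm_def)

lemma outer_nth [simp]: "outer u w $ k $ l = u $ k * w $ l"
  by (simp add: outer_def)

lemma if_zero_mult: "(if P then a else 0) * (b :: real) = (if P then a * b else 0)"
  by simp

lemma mult_if_zero: "(b :: real) * (if P then a else 0) = (if P then b * a else 0)"
  by simp

lemma diagm_mult_vector: "diagm a *v x = (\<chi> k. a $ k * x $ k)"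
  by (simp add: vec_eq_iff matrix_vector_mult_def if_zero_mult)

lemma vector_mult_diagm: "x v* diagm a = diagm a *v x"
  by (simp add: vec_eq_iff vector_matrix_mult_def matrix_vector_mult_def mult_if_zero
      if_zero_mult mult.commute)

lemma diagm_mult_diagm: "diagm a ** diagm b = diagm (\<chi> k. a $ k * b $ k)"
  by (simp add: vec_eq_iff matrix_matrix_mult_def if_zero_mult mult_if_zero)

lemma trace_diagm_mult_diagm:
  "trace (diagm a ** M ** diagm b) = (\<Sum>k\<in>UNIV. a $ k * M $ k $ k * b $ k)"
  by (simp add: trace_def matrix_matrix_mult_def if_zero_mult mult_if_zero)

lemma inner_diagm: "x \<bullet> (diagm a *v x) = (\<Sum>k\<in>UNIV. a $ k * (x $ k)\<^sup>2)"
  by (simp add: inner_vec_def diagm_mult_vector power2_eq_square mult_ac)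

lemma outer_mult_vector: "outer u w *v x = (w \<bullet> x) *\<^sub>R u"
  by (simp add: vec_eq_iff matrix_vector_mult_def inner_vec_def sum_distrib_left mult_ac)

lemma scaleR_matrix_mult_vector:
  fixes M :: "real^'n^'m"
  shows "(c *\<^sub>R M) *v x = c *\<^sub>R (M *v x)"
  by (simp add: vec_eq_iff matrix_vector_mult_def sum_distrib_left mult.assoc)

lemma matrix_mult_outer:
  fixes M :: "real^'n^'n"
  shows "M ** outer u w = outer (M *v u) w"
  by (simp add: vec_eq_iff matrix_matrix_mult_def matrix_vector_mult_def sum_distrib_right mult.assoc)

lemma outer_matrix_mult:
  fixes M :: "real^'n^'n"
  shows "outer u w ** M = outer u (w v* M)"
  by (simp add: vec_eq_iff matrix_matrix_mult_def vector_matrix_mult_def sum_distrib_left mult_ac)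

lemma outer_mult_outer: "outer u w ** outer y z = (w \<bullet> y) *\<^sub>R outer u z"
  by (simp add: vec_eq_iff matrix_matrix_mult_def inner_vec_def sum_distrib_left
      sum_distrib_right mult_ac)

lemma outer_scaleR_left: "outer (c *\<^sub>R u) w = c *\<^sub>R outer u w"
  by (simp add: vec_eq_iff)

lemma matrix_diff_rdistrib:
  fixes A :: "real^'n^'m"
  shows "(A - B) ** C = A ** C - B ** C"
  by (simp add: vec_eq_iff matrix_matrix_mult_def algebra_simps sum_subtractf)

lemma matrix_add_rdistrib:
  fixes A :: "real^'n^'m"
  shows "(A + B) ** C = A ** C + B ** C"
  by (simp add: vec_eq_iff matrix_matrix_mult_def algebra_simps sum.distrib)

lemma matrix_diff_ldistrib:
  fixes A :: "real^'n^'m"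
  shows "A ** (B - C) = A ** B - A ** C"
  by (simp add: vec_eq_iff matrix_matrix_mult_def algebra_simps sum_subtractf)

lemma edgevec_nth: "edgevec i j $ k = (if k = i then 1 else 0) - (if k = j then 1 else 0)"
  by (simp add: edgevec_def axis_def)

lemma inner_edgevec: "edgevec i j \<bullet> x = x $ i - x $ j"
  by (simp add: inner_vec_def edgevec_nth left_diff_distrib sum_subtractf if_zero_mult)

lemma edgevec_nonzero:
  assumes "i \<noteq> j"
  shows "edgevec i j \<noteq> 0"
proof -
  have "edgevec i j $ i = 1"
    using assms by (simp add: edgevec_nth)
  then show ?thesis
    by auto
qed

lemma matrix_inv_eq:
  fixes X Y :: "real^'n^'n"
  assumes "X ** Y = mat 1"
  shows "matrix_inv X = Y"
proof -
  have YX: "Y ** X = mat 1"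
    using assms matrix_left_right_inverse by blast
  have inv: "X ** matrix_inv X = mat 1 \<and> matrix_inv X ** X = mat 1"
    unfolding matrix_inv_def by (rule someI[of _ Y]) (use assms YX in blast)
  have "matrix_inv X = matrix_inv X ** (X ** Y)"
    using assms by simp
  also have "\<dots> = Y"
    using inv by (simp add: matrix_mul_assoc)
  finally show ?thesis .
qed

lemma transpose_right_inverse_symmetric:
  fixes S B :: "real^'n^'n"
  assumes "transpose S = S" and "S ** B = mat 1"
  shows "transpose B = B"
proof -
  have "transpose B ** S = mat 1"
    using assms by (metis matrix_transpose_mul transpose_mat)
  then have "transpose B = transpose B ** (S ** B)"
    using assms by simp
  also have "\<dots> = B"
    using \<open>transpose B ** S = mat 1\<close> by (simp add: matrix_mul_assoc)
  finally show ?thesis .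
qed

lemma sym_posdef_inverse:
  fixes S :: "real^'n^'n"
  assumes "sym_posdef S"
  shows "S ** matrix_inv S = mat 1" and "transpose (matrix_inv S) = matrix_inv S"
proof -
  have "S *v x = 0 \<Longrightarrow> x = 0" for x
    using assms unfolding sym_posdef_def by (metis inner_zero_right less_irrefl)
  then obtain B where "B ** S = mat 1"
    using matrix_left_invertible_ker by blast
  then have SB: "S ** B = mat 1"
    using matrix_left_right_inverse by blast
  then have "matrix_inv S = B"
    by (rule matrix_inv_eq)
  then show "S ** matrix_inv S = mat 1" and "transpose (matrix_inv S) = matrix_inv S"
    using assms SB transpose_right_inverse_symmetric unfolding sym_posdef_def by auto
qed

lemma sherman_morrison:
  fixes S B :: "real^'n^'n"
  assumes SB: "S ** B = mat 1" and symB: "transpose B = B"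
    and x: "x = B *v v" and denom: "a * (v \<bullet> x) \<noteq> 1"
  shows "(S - a *\<^sub>R outer v v) ** (B + (a / (1 - a * (v \<bullet> x))) *\<^sub>R outer x x) = mat 1"
proof -
  define g where "g = a / (1 - a * (v \<bullet> x))"
  have Sx: "S *v x = v"
    by (simp add: x matrix_vector_mul_assoc SB)
  have vB: "v v* B = x"
    using symB x by (metis transpose_matrix_vector)
  have "(S - a *\<^sub>R outer v v) ** (B + g *\<^sub>R outer x x)
      = S ** B + g *\<^sub>R (S ** outer x x) - a *\<^sub>R (outer v v ** B)
        - (a * g) *\<^sub>R (outer v v ** outer x x)"
    by (simp add: matrix_diff_rdistrib matrix_add_ldistrib matrix_scalar_ac
        scalar_matrix_assoc[symmetric] algebra_simps)
  also have "\<dots> = mat 1 + (g - a - a * g * (v \<bullet> x)) *\<^sub>R outer v x"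
    by (simp add: SB matrix_mult_outer outer_matrix_mult outer_mult_outer
        outer_mult_vector outer_scaleR_left Sx vB flip: x) (simp add: algebra_simps)
  also have "g - a - a * g * (v \<bullet> x) = 0"
    using denom by (simp add: g_def field_simps)
  finally show ?thesis
    by (simp add: g_def)
qed

lemma Kr_eq_weighted_trace:
  fixes d :: "real^'n" and B Y :: "real^'n^'n"
  assumes dpos: "\<And>k. d $ k > 0"
    and inv: "((1 + r) *\<^sub>R diagm d - B + (1 / norm1 d) *\<^sub>R outer d d) ** Y = mat 1"
  shows "Kr r d B = (\<Sum>k\<in>UNIV. d $ k * Y $ k $ k) - 1 / (1 + r)"
proof -
  define X where "X = (1 + r) *\<^sub>R diagm d - B + (1 / norm1 d) *\<^sub>R outer d d"
  define p where "p = (\<chi> k. 1 / sqrt (d $ k))"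
  define s where "s = (\<chi> k. sqrt (d $ k))"
  have dne: "d $ k \<noteq> 0" and dabs: "\<bar>d $ k\<bar> = d $ k" for k
    using dpos[of k] by auto
  have pdp: "diagm p ** diagm d ** diagm p = mat 1"
    using dne dabs by (simp add: diagm_mult_diagm p_def vec_eq_iff mat_def)
  have pd: "diagm p *v d = s"
    using dpos by (simp add: diagm_mult_vector p_def s_def vec_eq_iff real_div_sqrt less_imp_le)
  have ps: "diagm p ** diagm s = mat 1"
    using dne by (simp add: diagm_mult_diagm p_def s_def vec_eq_iff mat_def)
  have similar: "(1 + r) *\<^sub>R mat 1 - diagm p ** B ** diagm p + (1 / norm1 d) *\<^sub>R outer s s
      = diagm p ** X ** diagm p"
    by (simp add: X_def matrix_diff_rdistrib matrix_add_rdistrib matrix_add_ldistrib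
        matrix_diff_ldistrib matrix_scalar_ac scalar_matrix_assoc[symmetric] pdp
        matrix_mult_outer outer_matrix_mult vector_mult_diagm scaleR_matrix_mult_vector outer_scaleR_left pd)
  have "(diagm p ** X ** diagm p) ** (diagm s ** Y ** diagm s)
      = diagm p ** (X ** (diagm p ** diagm s) ** Y) ** diagm s"
    by (simp add: matrix_mul_assoc)
  also have "\<dots> = mat 1"
    using inv ps by (simp add: X_def)
  finally have "matrix_inv (diagm p ** X ** diagm p) = diagm s ** Y ** diagm s"
    by (rule matrix_inv_eq)
  then have "Kr r d B = trace (diagm s ** Y ** diagm s) - 1 / (1 + r)"
    unfolding Kr_def p_def[symmetric] s_def[symmetric] similar by simp
  also have "trace (diagm s ** Y ** diagm s) = (\<Sum>k\<in>UNIV. d $ k * Y $ k $ k)"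
  proof -
    have diag: "s $ k * Y $ k $ k * s $ k = d $ k * Y $ k $ k" for k
    proof -
      have "s $ k * s $ k = d $ k"
        using dabs by (simp add: s_def)
      then show ?thesis
        by (metis mult.commute mult.assoc)
    qed
    show ?thesis
      by (simp only: trace_diagm_mult_diagm diag)
  qed
  finally show ?thesis .
qed

locale weighted_graph =
  fixes A :: "real^'n^'n"
  assumes symmetric: "transpose A = A"
    and nonneg: "\<And>k l. A $ k $ l \<ge> 0"
    and degree_pos: "\<And>k. degvec A $ k > 0"
begin

lemma adjacency_commute: "A $ l $ k = A $ k $ l"
  using symmetric by (metis transpose_def vec_lambda_beta)

lemma norm1_degvec_pos: "norm1 (degvec A) > 0"
  unfolding norm1_def using degree_pos by (intro sum_pos) (auto simp: abs_of_pos)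

lemma degree_form_pos:
  assumes "x \<noteq> 0"
  shows "x \<bullet> (diagm (degvec A) *v x) > 0"
proof -
  obtain k where "x $ k \<noteq> 0"
    using assms by (metis vec_eq_iff zero_index)
  then have "0 < degvec A $ k * (x $ k)\<^sup>2"
    using degree_pos[of k] by simp
  also have "\<dots> \<le> (\<Sum>k\<in>UNIV. degvec A $ k * (x $ k)\<^sup>2)"
    by (rule member_le_sum) (auto intro!: mult_nonneg_nonneg less_imp_le[OF degree_pos])
  finally show ?thesis
    by (simp add: inner_diagm)
qed

lemma laplacian_form:
  "x \<bullet> (diagm (degvec A) *v x) - x \<bullet> (A *v x)
    = (\<Sum>k\<in>UNIV. \<Sum>l\<in>UNIV. A $ k $ l * (x $ k - x $ l)\<^sup>2) / 2"
proof -
  have degree: "x \<bullet> (diagm (degvec A) *v x) = (\<Sum>k\<in>UNIV. \<Sum>l\<in>UNIV. A $ k $ l * (x $ k)\<^sup>2)"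
    by (simp add: inner_diagm degvec_def sum_distrib_right)
  have adjacency: "x \<bullet> (A *v x) = (\<Sum>k\<in>UNIV. \<Sum>l\<in>UNIV. A $ k $ l * x $ k * x $ l)"
    by (simp add: inner_vec_def matrix_vector_mult_def sum_distrib_left mult_ac)
  have swap: "(\<Sum>k\<in>UNIV. \<Sum>l\<in>UNIV. A $ k $ l * (x $ l)\<^sup>2)
      = (\<Sum>k\<in>UNIV. \<Sum>l\<in>UNIV. A $ k $ l * (x $ k)\<^sup>2)"
    by (subst sum.swap) (simp add: adjacency_commute)
  have "(\<Sum>k\<in>UNIV. \<Sum>l\<in>UNIV. A $ k $ l * (x $ k - x $ l)\<^sup>2)
      = (\<Sum>k\<in>UNIV. \<Sum>l\<in>UNIV. A $ k $ l * (x $ k)\<^sup>2)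
        - 2 * (\<Sum>k\<in>UNIV. \<Sum>l\<in>UNIV. A $ k $ l * x $ k * x $ l)
        + (\<Sum>k\<in>UNIV. \<Sum>l\<in>UNIV. A $ k $ l * (x $ l)\<^sup>2)"
    by (simp add: power2_diff algebra_simps sum.distrib sum_subtractf sum_distrib_left)
  then show ?thesis
    using degree adjacency swap by linarith
qed

lemma laplacian_form_ge_edge:
  assumes "i \<noteq> j"
  shows "x \<bullet> (diagm (degvec A) *v x) - x \<bullet> (A *v x) \<ge> A $ i $ j * (x $ i - x $ j)\<^sup>2"
proof -
  define F where "F k l = A $ k $ l * (x $ k - x $ l)\<^sup>2" for k l
  have F_nonneg: "F k l \<ge> 0" for k l
    using nonneg by (simp add: F_def)
  have "2 * (A $ i $ j * (x $ i - x $ j)\<^sup>2) = F i j + F j i"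
    by (simp add: F_def adjacency_commute[of i j] power2_commute)
  also have "\<dots> = (\<Sum>k\<in>{i, j}. F k (if k = i then j else i))"
    using assms by simp
  also have "\<dots> \<le> (\<Sum>k\<in>{i, j}. \<Sum>l\<in>UNIV. F k l)"
    by (intro sum_mono member_le_sum) (auto intro: F_nonneg)
  also have "\<dots> \<le> (\<Sum>k\<in>UNIV. \<Sum>l\<in>UNIV. F k l)"
    by (intro sum_mono2) (auto intro: sum_nonneg F_nonneg)
  finally show ?thesis
    by (simp add: laplacian_form F_def)
qed

lemma Smat_symmetric: "transpose (Smat r A) = Smat r A"
  by (simp add: vec_eq_iff transpose_def Smat_def adjacency_commute mult.commute)

lemma Smat_form:
  "x \<bullet> (Smat r A *v x) = r * (x \<bullet> (diagm (degvec A) *v x))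
    + (x \<bullet> (diagm (degvec A) *v x) - x \<bullet> (A *v x)) + (degvec A \<bullet> x)\<^sup>2 / norm1 (degvec A)"
  by (simp add: Smat_def algebra_simps scaleR_matrix_mult_vector outer_mult_vector
      inner_diff_right inner_add_right power2_eq_square inner_commute[of x])

lemma sym_posdef_Smat:
  assumes "r > 0"
  shows "sym_posdef (Smat r A)"
  unfolding sym_posdef_def
proof (intro conjI allI impI Smat_symmetric)
  fix x :: "real^'n"
  assume "x \<noteq> 0"
  then have "r * (x \<bullet> (diagm (degvec A) *v x)) > 0"
    using assms degree_form_pos by simp
  moreover have "x \<bullet> (diagm (degvec A) *v x) - x \<bullet> (A *v x) \<ge> 0"
    by (simp add: laplacian_form sum_nonneg nonneg)
  moreover have "(degvec A \<bullet> x)\<^sup>2 / norm1 (degvec A) \<ge> 0"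
    using norm1_degvec_pos by simp
  ultimately show "x \<bullet> (Smat r A *v x) > 0"
    by (simp add: Smat_form)
qed

lemma Smat_form_ge_edge:
  assumes "i \<noteq> j"
  shows "x \<bullet> (Smat r A *v x)
    \<ge> r * (x \<bullet> (diagm (degvec A) *v x)) + A $ i $ j * (x $ i - x $ j)\<^sup>2"
proof -
  have "(degvec A \<bullet> x)\<^sup>2 / norm1 (degvec A) \<ge> 0"
    using norm1_degvec_pos by simp
  then show ?thesis
    using laplacian_form_ge_edge[OF assms, of x] by (simp add: Smat_form)
qed

lemma edge_alpha_lt_1:
  assumes "i \<noteq> j" and "r > 0"
  defines "x \<equiv> matrix_inv (Smat r A) *v edgevec i j"
  shows "A $ i $ j * (x $ i - x $ j) < 1"
proof -
  define t where "t = x $ i - x $ j"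
  have "Smat r A *v x = edgevec i j"
    using sym_posdef_inverse(1)[OF sym_posdef_Smat[OF \<open>r > 0\<close>]]
    by (simp add: x_def matrix_vector_mul_assoc)
  then have "x \<noteq> 0" and t_form: "t = x \<bullet> (Smat r A *v x)"
    using edgevec_nonzero[OF \<open>i \<noteq> j\<close>]
    by (auto simp: inner_edgevec inner_commute[of x] t_def)
  have "r * (x \<bullet> (diagm (degvec A) *v x)) > 0"
    using \<open>r > 0\<close> degree_form_pos[OF \<open>x \<noteq> 0\<close>] by simp
  then have "A $ i $ j * t\<^sup>2 < t"
    using Smat_form_ge_edge[OF \<open>i \<noteq> j\<close>, where x = x and r = r]
    unfolding t_def[symmetric] t_form[symmetric] by linarith
  moreover have "A $ i $ j * t\<^sup>2 \<ge> 0"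
    using nonneg[of i j] by simp
  ultimately have "0 < t" and "(A $ i $ j * t) * t < 1 * t"
    by (simp_all add: power2_eq_square mult.assoc)
  then show ?thesis
    unfolding t_def[symmetric] using mult_right_less_imp_less by fastforce
qed

lemma cr_eq_quotient:
  assumes "i \<noteq> j" and "r > 0"
  defines "x \<equiv> matrix_inv (Smat r A) *v edgevec i j"
  shows "cr r A i j = A $ i $ j * (x \<bullet> (diagm (degvec A) *v x)) / (1 - A $ i $ j * (x $ i - x $ j))"
proof -
  define d a v B where "d = degvec A" and "a = A $ i $ j" and "v = edgevec i j"
    and "B = matrix_inv (Smat r A)"
  define g where "g = a / (1 - a * (v \<bullet> x))"
  have SB: "Smat r A ** B = mat 1" and symB: "transpose B = B"
    using sym_posdef_inverse[OF sym_posdef_Smat[OF \<open>r > 0\<close>]] by (simp_all add: B_def)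
  have "a * (v \<bullet> x) \<noteq> 1"
    using edge_alpha_lt_1[OF assms(1,2)] by (simp add: a_def v_def x_def inner_edgevec)
  moreover have "x = B *v v"
    by (simp add: x_def B_def v_def)
  ultimately have SM: "(Smat r A - a *\<^sub>R outer v v) ** (B + g *\<^sub>R outer x x) = mat 1"
    unfolding g_def using sherman_morrison[OF SB symB] by blast
  have "Kr r d A = (\<Sum>k\<in>UNIV. d $ k * B $ k $ k) - 1 / (1 + r)"
    using SB degree_pos by (intro Kr_eq_weighted_trace) (simp_all add: Smat_def d_def)
  moreover have "Kr r d (Ahat A i j)
      = (\<Sum>k\<in>UNIV. d $ k * (B + g *\<^sub>R outer x x) $ k $ k) - 1 / (1 + r)"
    using SM degree_pos by (intro Kr_eq_weighted_trace)
      (simp_all add: Smat_def Ahat_def d_def a_def v_def algebra_simps)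
  ultimately have "cr r A i j = g * (\<Sum>k\<in>UNIV. d $ k * (x $ k)\<^sup>2)"
    by (simp add: cr_def d_def[symmetric] algebra_simps sum.distrib sum_distrib_left
        power2_eq_square)
  then show ?thesis
    by (simp add: g_def a_def v_def d_def inner_edgevec inner_diagm)
qed

end

theorem mainTheorem12:
  fixes A :: "real^'n^'n" and i j :: 'n and r :: real
  assumes symA: "transpose A = A"
    and nonneg: "\<forall>k l. A$k$l \<ge> 0"
    and degpos: "\<forall>k. degvec A $ k > 0"
    and ij: "i \<noteq> j"
    and edge: "A$i$j > 0"
    and rpos: "r > 0"
  shows "sym_posdef (Smat r A) \<and>
    (let x = matrix_inv (Smat r A) *v edgevec i j;
         \<alpha> = A$i$j * (x$i - x$j);
         \<beta> = A$i$j * (x \<bullet> (diagm (degvec A) *v x))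
     in \<alpha> < 1 \<and> cr r A i j = \<beta> / (1 - \<alpha>))"
proof -
  interpret weighted_graph A
    using symA nonneg degpos by unfold_locales auto
  show ?thesis
    unfolding Let_def
    using sym_posdef_Smat[OF rpos] edge_alpha_lt_1[OF ij rpos] cr_eq_quotient[OF ij rpos]
    by simp
qed

end
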